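(* For the merging problem with $n$ items and $k\le n$ slots (with $a_i\ge 0$ almost surely and $o_i\ge 0$, and arbitrary, not necessarily identical, distributions $G_i$), the G-CHANGE mechanism is $1/2$-approximate: $\mathrm{OBJ}(\mathcal M^C)\ge\frac12\mathrm{OBJ}(\mathcal M^* )$.
   Context: Merging problem: $n$ items indexed by $[n]$, $k\le n$ slots. Each item $i$ has a random ad value $a_i$, drawn independently from a regular distribution $G_i$ ($\boldsymbol a\sim G=\times_i G_i$), and a fixed organic value $o_i\ge0$. A mechanism is a pair of allocation rules $x,y$ with $x_i(\boldsymbol a),y_i(\boldsymbol a)\in\{0,1\}$ ($x_i=1$: item $i$ shown as ad; $y_i=1$: shown organically) satisfying for all $\boldsymbol a,i$: (i) $\sum_i(x_i+y_i)\le k$; (ii) $x_i+y_i\le 1$; (iii) $y_i(a_i,\boldsymbol a_{-i})$ independent of $a_i$; (iv) $x_i(a_i,\boldsymbol a_{-i})$ non-decreasing in $a_i$. Objective $\mathrm{OBJ}=\mathbb E_{\boldsymbol a\sim G}[\sum_i(a_ix_i(\boldsymbol a)+o_iy_i(\boldsymbol a))]$; $\mathcal M^*$ maximizes it subject to (i)–(iv). A mechanism $\mathcal M$ is $\tau$-approximate if $\mathrm{OBJ}(\mathcal M)/\mathrm{OBJ}(\mathcal M^* )\ge\tau$. Notation: $\max^{(m)}S$ is the sum of the $m$ largest elements of a finite multiset $S$ ($\max^{(0)}S=0$); $\mathbb E_{a_j}[\cdot]$ denotes expectation over $a_j\sim G_j$ only, the other coordinates held fixed. G-CHANGE-$I$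 mechanism $\mathcal M^C_I$, for an ordered list $I=(i_1,\dots,i_k)$ of distinct items: for $t\in[k]$ let $R_t=\sum_{j=1}^{t-1}o_{i_j}+\max^{(k-t)}\{a_i: i\notin\{i_1,\dots,i_t\}\}$, and define recursively $w_{i_1}^{\boldsymbol a}=\mathbb E_{a_{i_1}}[\max^{(k)}\{a_1,\dots,a_n\}]-R_1$ and, for $t>1$, $w_{i_t}^{\boldsymbol a}=\mathbb E_{a_{i_t}}[\max\{o_{i_{t-1}}+R_{t-1},\,w_{i_{t-1}}^{\boldsymbol a}+R_{t-1}\}]-R_t$. Let $s^*$ be the largest $s\in[k]$ with $o_{i_s}\ge w_{i_s}^{\boldsymbol a}$ and $o_{i_t}<w_{i_t}^{\boldsymbol a}$ for all $t>s$ (and $s^*=0$ if none). The mechanism shows $i_1,\dots,i_{s^*}$ in organic form and shows as ads the $k-s^*$ items outside $\{i_1,\dots,i_{s^*}\}$ with the largest $a_i$. Its objective is $\mathrm{OBJ}(\mathcal M^C_I)=\mathbb E_{\boldsymbol a\sim G}\big[\max\{\sum_{j=1}^k o_{i_j},\ w_{i_k}^{\boldsymbol a}+\sum_{j=1}^{k-1}o_{i_j}\}\big]$. The G-CHANGE mechanism $\mathcal M^C$ runs the $\mathcal M^C_I$ of highest objective over all ordered lists $I$ of $k$ distinct items of $[n]$, so $\mathrm{OBJ}(\mathcal M^C)=\max_I\mathrm{OBJ}(\mathcal M^C_I)$.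
   Formalization: Each $a_i$ also has finite mean under $G_i$, and $\mathrm{OBJ}(\mathcal M^C_I)$ is the expected value of the described allocation (organic $i_1,\dots,i_{s^*}$, ads the $k-s^*$ largest others) instead of the closed-form max expression. The paper assumes this as well. *)

theory Defs
  imports "HOL-Probability.Probability"
begin

(* Items are the naturals 0..<n (i.e. [n] shifted by one); a bid profile is a
   function nat => real, of which only coordinates < n matter. *)

definition topsum :: "nat \<Rightarrow> nat set \<Rightarrow> (nat \<Rightarrow> real) \<Rightarrow> real" where
  "topsum m A a = Max ((\<lambda>B. \<Sum>i\<in>B. a i) ` {B. B \<subseteq> A \<and> card B = m})"

definition profile_dist :: "nat \<Rightarrow> (nat \<Rightarrow> real measure) \<Rightarrow> (nat \<Rightarrow> real) measure" where
  "profile_dist n G = PiM {..<n} G"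

definition feasible_mech ::
  "nat \<Rightarrow> nat \<Rightarrow> ((nat \<Rightarrow> real) \<Rightarrow> nat \<Rightarrow> bool) \<Rightarrow> ((nat \<Rightarrow> real) \<Rightarrow> nat \<Rightarrow> bool) \<Rightarrow> bool" where
  "feasible_mech n k x y \<longleftrightarrow>
     (\<forall>a. card {i. i < n \<and> x a i} + card {i. i < n \<and> y a i} \<le> k) \<and>
     (\<forall>a i. i < n \<longrightarrow> \<not> (x a i \<and> y a i)) \<and>
     (\<forall>a i t. i < n \<longrightarrow> y (a(i := t)) i = y a i) \<and>
     (\<forall>a i s t. i < n \<longrightarrow> s \<le> t \<longrightarrow> x (a(i := s)) i \<longrightarrow> x (a(i := t)) i)"

definition OBJ ::
  "nat \<Rightarrow> (nat \<Rightarrow> real measure) \<Rightarrow> (nat \<Rightarrow> real) \<Rightarrow>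
   ((nat \<Rightarrow> real) \<Rightarrow> nat \<Rightarrow> bool) \<Rightarrow> ((nat \<Rightarrow> real) \<Rightarrow> nat \<Rightarrow> bool) \<Rightarrow> real" where
  "OBJ n G ov x y = (\<integral>a. (\<Sum>i<n. (if x a i then a i else 0) + (if y a i then ov i else 0))
                      \<partial>profile_dist n G)"

(* R_{t+1} for the list I (0-based t):
   sum_{j<t} o_{I!j} + max^(k-(t+1)) {a_i : i \<notin> {I!0,...,I!t}} *)
definition Rc :: "nat \<Rightarrow> nat \<Rightarrow> (nat \<Rightarrow> real) \<Rightarrow> nat list \<Rightarrow> nat \<Rightarrow> (nat \<Rightarrow> real) \<Rightarrow> real" where
  "Rc n k ov I t a = (\<Sum>j<t. ov (I ! j)) + topsum (k - Suc t) ({..<n} - set (take (Suc t) I)) a"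

(* wC ... t a = w_{i_{t+1}}^a  (0-based t) *)
primrec wC :: "nat \<Rightarrow> nat \<Rightarrow> (nat \<Rightarrow> real measure) \<Rightarrow> (nat \<Rightarrow> real) \<Rightarrow> nat list \<Rightarrow> nat
               \<Rightarrow> (nat \<Rightarrow> real) \<Rightarrow> real" where
  "wC n k G ov I 0 a =
     (\<integral>s. topsum k {..<n} (a(I ! 0 := s)) \<partial>G (I ! 0)) - Rc n k ov I 0 a"
| "wC n k G ov I (Suc t) a =
     (\<integral>s. max (ov (I ! t) + Rc n k ov I t (a(I ! Suc t := s)))
               (wC n k G ov I t (a(I ! Suc t := s)) + Rc n k ov I t (a(I ! Suc t := s)))
        \<partial>G (I ! Suc t)) - Rc n k ov I (Suc t) a"

definition sstar :: "nat \<Rightarrow> nat \<Rightarrow> (nat \<Rightarrow> real measure) \<Rightarrow> (nat \<Rightarrow> real) \<Rightarrow> nat list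
                     \<Rightarrow> (nat \<Rightarrow> real) \<Rightarrow> nat" where
  "sstar n k G ov I a =
     Max ({0} \<union> {s \<in> {1..k}. ov (I ! (s - 1)) \<ge> wC n k G ov I (s - 1) a})"

definition OBJ_GC_I :: "nat \<Rightarrow> nat \<Rightarrow> (nat \<Rightarrow> real measure) \<Rightarrow> (nat \<Rightarrow> real) \<Rightarrow> nat list \<Rightarrow> real" where
  "OBJ_GC_I n k G ov I =
     (\<integral>a. (let s = sstar n k G ov I a in
            (\<Sum>j<s. ov (I ! j)) + topsum (k - s) ({..<n} - set (take s I)) a)
      \<partial>profile_dist n G)"

definition OBJ_GC :: "nat \<Rightarrow> nat \<Rightarrow> (nat \<Rightarrow> real measure) \<Rightarrow> (nat \<Rightarrow> real) \<Rightarrow> real" where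
  "OBJ_GC n k G ov =
     Max (OBJ_GC_I n k G ov ` {I. distinct I \<and> length I = k \<and> set I \<subseteq> {..<n}})"

end

theory Submission
  imports Defs
begin

text \<open>
  Let \<open>A\<close> be the expected sum of the \<open>k\<close> largest ad values and \<open>S\<close> the largest sum of
  \<open>k\<close> organic values. Pointwise, a feasible mechanism shows at most \<open>k\<close> ads and at most
  \<open>k\<close> organic items, so \<open>OBJ(M*) \<le> A + S\<close>. Take the list \<open>I\<close> of \<open>k\<close> items realising \<open>S\<close>.
  By backward induction over the positions of \<open>I\<close>, the objective of G-CHANGE-\<open>I\<close> is the
  expectation of \<open>V k\<close>, where \<open>V 0\<close> is the sum of the \<open>k\<close> largest ads and \<open>V (t + 1)\<close>
  is the larger of the value of showing the \<open>t\<close>-th item of \<open>I\<close> organically and the average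
  of \<open>V t\<close> over that item's ad value. By Fubini \<open>E[V t]\<close> increases with \<open>t\<close>, so the
  objective is at least \<open>E[V 0] = A\<close>; and \<open>V k \<ge> S\<close> pointwise. Hence
  \<open>OBJ(M\<^sup>C) \<ge> max A S \<ge> (A + S) / 2\<close>.
\<close>

lemma topsum_family_finite: "finite A \<Longrightarrow> finite {B. B \<subseteq> A \<and> card B = m}"
  by (rule rev_finite_subset[OF finite_Pow_iff[THEN iffD2]]) auto

lemma topsum_family_nonempty: "m \<le> card A \<Longrightarrow> {B. B \<subseteq> A \<and> card B = m} \<noteq> {}"
  using obtain_subset_with_card_n by blast

lemma sum_le_topsum:
  assumes "finite A" "B \<subseteq> A" "card B = m"
  shows "(\<Sum>i\<in>B. a i) \<le> topsum m A a"
  unfolding topsum_def using assms topsum_family_finite[OF assms(1)] by (intro Max_ge) auto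

lemma topsum_attained:
  assumes "finite A" "m \<le> card A"
  obtains B where "B \<subseteq> A" "card B = m" "topsum m A a = (\<Sum>i\<in>B. a i)"
proof -
  have "topsum m A a \<in> (\<lambda>B. \<Sum>i\<in>B. a i) ` {B. B \<subseteq> A \<and> card B = m}"
    unfolding topsum_def
    using topsum_family_finite[OF assms(1)] topsum_family_nonempty[OF assms(2)] by (intro Max_in) auto
  then show ?thesis using that by auto
qed

lemma topsum_0:
  assumes "finite A"
  shows "topsum 0 A a = 0"
proof -
  have "{B. B \<subseteq> A \<and> card B = 0} = {{}}" using assms by (auto dest: finite_subset)
  then show ?thesis by (simp add: topsum_def)
qed

lemma sum_le_topsum_of_card_le:
  assumes "finite A" "B \<subseteq> A" "card B \<le> m" "m \<le> card A" "\<And>i. i \<in> A \<Longrightarrow> a i \<ge> 0"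
  shows "(\<Sum>i\<in>B. a i) \<le> topsum m A a"
proof -
  have "m - card B \<le> card (A - B)"
    using assms(1-4) by (simp add: card_Diff_subset finite_subset)
  then obtain T where T: "T \<subseteq> A - B" "card T = m - card B"
    by (metis obtain_subset_with_card_n)
  have fin: "finite B" "finite T" using assms(1,2) T(1) by (auto dest: finite_subset)
  have "(\<Sum>i\<in>B. a i) \<le> (\<Sum>i\<in>B \<union> T. a i)"
    using fin T(1) assms(5) by (intro sum_mono2) auto
  also have "\<dots> \<le> topsum m A a"
  proof (rule sum_le_topsum[OF assms(1)])
    show "B \<union> T \<subseteq> A" using assms(2) T(1) by blast
    show "card (B \<union> T) = m" using fin T assms(3) by (subst card_Un_disjoint) auto
  qed
  finally show ?thesis .
qed

lemma topsum_nonneg: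
  assumes "finite A" "m \<le> card A" "\<And>i. i \<in> A \<Longrightarrow> a i \<ge> 0"
  shows "topsum m A a \<ge> 0"
  using sum_le_topsum_of_card_le[of A "{}" m] assms by simp

lemma abs_topsum_le:
  assumes "finite A" "m \<le> card A"
  shows "\<bar>topsum m A a\<bar> \<le> (\<Sum>i\<in>A. \<bar>a i\<bar>)"
proof -
  obtain B where B: "B \<subseteq> A" "topsum m A a = (\<Sum>i\<in>B. a i)"
    using topsum_attained[OF assms] by metis
  have "\<bar>\<Sum>i\<in>B. a i\<bar> \<le> (\<Sum>i\<in>B. \<bar>a i\<bar>)" by (rule sum_abs)
  also have "\<dots> \<le> (\<Sum>i\<in>A. \<bar>a i\<bar>)" using B assms(1) by (intro sum_mono2) auto
  finally show ?thesis using B by simp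
qed

lemma topsum_fun_upd_outside: "j \<notin> A \<Longrightarrow> topsum m A (a(j := v)) = topsum m A a"
  unfolding topsum_def by (intro arg_cong[where f = Max] image_cong refl sum.cong) auto

lemma feasible_value_le_topsum_add_topsum:
  assumes "feasible_mech n k x y" "k \<le> n"
    and "\<And>i. i < n \<Longrightarrow> a i \<ge> 0" "\<And>i. i < n \<Longrightarrow> ov i \<ge> 0"
  shows "(\<Sum>i<n. (if x a i then a i else 0) + (if y a i then ov i else 0))
           \<le> topsum k {..<n} a + topsum k {..<n} ov"
proof -
  define X where "X = {i. i < n \<and> x a i}"
  define Y where "Y = {i. i < n \<and> y a i}"
  have card: "card X \<le> k" "card Y \<le> k"
    using assms(1) unfolding feasible_mech_def X_def Y_def by (meson le_add1 le_add2 order_trans)+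
  have "(\<Sum>i<n. (if x a i then a i else 0) + (if y a i then ov i else 0))
          = (\<Sum>i\<in>X. a i) + (\<Sum>i\<in>Y. ov i)"
    unfolding sum.distrib X_def Y_def by (simp add: sum.inter_filter[symmetric] lessThan_def)
  also have "\<dots> \<le> topsum k {..<n} a + topsum k {..<n} ov"
    using card assms(2-4) unfolding X_def Y_def
    by (intro add_mono sum_le_topsum_of_card_le) auto
  finally show ?thesis .
qed

locale profile_space =
  fixes n :: nat and G :: "nat \<Rightarrow> real measure"
  assumes prob_space_G: "\<And>i. i < n \<Longrightarrow> prob_space (G i)"
    and sets_G: "\<And>i. i < n \<Longrightarrow> sets (G i) = sets borel"
    and integrable_G: "\<And>i. i < n \<Longrightarrow> integrable (G i) (\<lambda>t. t)"
begin

abbreviation P :: "(nat \<Rightarrow> real) measure" where "P \<equiv> PiM {..<n} G"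

lemma prob_space_P: "prob_space P"
  by (rule prob_space_PiM) (auto intro: prob_space_G)

lemma space_G: "i < n \<Longrightarrow> space (G i) = UNIV"
  using sets_eq_imp_space_eq[OF sets_G] by simp

lemma fun_upd_in_space_P:
  assumes "a \<in> space P" "i < n"
  shows "a(i := s) \<in> space P"
proof -
  have "a(i := s) \<in> PiE (insert i {..<n}) (\<lambda>i. space (G i))"
    using assms space_G by (intro PiE_fun_upd) (auto simp: space_PiM)
  then show ?thesis using assms(2) by (simp add: space_PiM insert_absorb)
qed

lemma measurable_component_G: "i < n \<Longrightarrow> (\<lambda>a. a i) \<in> measurable P (G i)"
  by (rule measurable_component_singleton) simp

lemma measurable_component_P: "i < n \<Longrightarrow> (\<lambda>a. a i) \<in> borel_measurable P"
  using measurable_component_G measurable_cong_sets[OF refl sets_G, of _ P] by metis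

lemma integrable_component_P:
  assumes "i < n"
  shows "integrable P (\<lambda>a. a i)"
proof -
  have "distr P (G i) (\<lambda>a. a i) = G i"
    using assms prob_space_G by (intro distr_PiM_component) auto
  then show ?thesis
    using integrable_distr_eq[OF measurable_component_G[OF assms] measurable_ident_sets[OF sets_G[OF assms]]]
      integrable_G[OF assms] by simp
qed

lemma measurable_fun_upd_P: "i < n \<Longrightarrow> (\<lambda>(a, s). a(i := s)) \<in> measurable (P \<Otimes>\<^sub>M G i) P"
  using measurable_add_dim[of i "{..<n}" G] by (simp add: insert_absorb)

text \<open>
  Each \<open>G i\<close> has a first moment, so functions of linear growth in \<open>\<Sum>j<n. \<bar>a j\<bar>\<close> are
  integrable; unlike integrability alone, linear growth survives averaging out a coordinate.
\<close>

definition lin_bounded :: "((nat \<Rightarrow> real) \<Rightarrow> real) \<Rightarrow> bool" where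
  "lin_bounded h \<longleftrightarrow> h \<in> borel_measurable P \<and>
     (\<exists>C. \<forall>a\<in>space P. \<bar>h a\<bar> \<le> C * (1 + (\<Sum>j<n. \<bar>a j\<bar>)))"

lemma lin_boundedI:
  "h \<in> borel_measurable P \<Longrightarrow> (\<And>a. a \<in> space P \<Longrightarrow> \<bar>h a\<bar> \<le> C * (1 + (\<Sum>j<n. \<bar>a j\<bar>)))
     \<Longrightarrow> lin_bounded h"
  unfolding lin_bounded_def by blast

lemma lin_boundedE:
  assumes "lin_bounded h"
  obtains C where "h \<in> borel_measurable P" "C \<ge> 0"
    "\<And>a. a \<in> space P \<Longrightarrow> \<bar>h a\<bar> \<le> C * (1 + (\<Sum>j<n. \<bar>a j\<bar>))"
proof -
  obtain C where h: "h \<in> borel_measurable P"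
    and C: "\<And>a. a \<in> space P \<Longrightarrow> \<bar>h a\<bar> \<le> C * (1 + (\<Sum>j<n. \<bar>a j\<bar>))"
    using assms unfolding lin_bounded_def by blast
  have "\<bar>h a\<bar> \<le> \<bar>C\<bar> * (1 + (\<Sum>j<n. \<bar>a j\<bar>))" if "a \<in> space P" for a
  proof -
    have "0 \<le> 1 + (\<Sum>j<n. \<bar>a j\<bar>)" by (simp add: sum_nonneg add_nonneg_nonneg)
    then have "C * (1 + (\<Sum>j<n. \<bar>a j\<bar>)) \<le> \<bar>C\<bar> * (1 + (\<Sum>j<n. \<bar>a j\<bar>))"
      by (intro mult_right_mono) auto
    with C[OF that] show ?thesis by linarith
  qed
  with h show ?thesis by (intro that[of "\<bar>C\<bar>"]) auto
qed

lemma lin_bounded_measurable: "lin_bounded h \<Longrightarrow> h \<in> borel_measurable P"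
  by (simp add: lin_bounded_def)

lemma lin_bounded_integrable:
  assumes "lin_bounded h"
  shows "integrable P h"
proof -
  interpret p: prob_space P by (rule prob_space_P)
  obtain C where h: "h \<in> borel_measurable P"
    and C: "\<And>a. a \<in> space P \<Longrightarrow> \<bar>h a\<bar> \<le> C * (1 + (\<Sum>j<n. \<bar>a j\<bar>))"
    using assms by (metis lin_boundedE)
  have "integrable P (\<lambda>a. \<Sum>j<n. \<bar>a j\<bar>)"
    using integrable_component_P by (intro Bochner_Integration.integrable_sum integrable_abs) auto
  then have "integrable P (\<lambda>a. C * (1 + (\<Sum>j<n. \<bar>a j\<bar>)))"
    by (intro Bochner_Integration.integrable_mult_right Bochner_Integration.integrable_add
        p.integrable_const)
  then show ?thesis
    by (rule Bochner_Integration.integrable_bound[OF _ h]) (auto intro!: AE_I2 order_trans[OF C])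
qed

lemma lin_bounded_const: "lin_bounded (\<lambda>a. c)"
  by (rule lin_boundedI[where C = "\<bar>c\<bar>"]) (auto simp: algebra_simps sum_nonneg)

lemma lin_bounded_dominated:
  assumes "lin_bounded f" "lin_bounded g" "h \<in> borel_measurable P"
    and "\<And>a. \<bar>h a\<bar> \<le> \<bar>f a\<bar> + \<bar>g a\<bar>"
  shows "lin_bounded h"
proof -
  obtain C1 C2 where
    C1: "\<And>a. a \<in> space P \<Longrightarrow> \<bar>f a\<bar> \<le> C1 * (1 + (\<Sum>j<n. \<bar>a j\<bar>))" and
    C2: "\<And>a. a \<in> space P \<Longrightarrow> \<bar>g a\<bar> \<le> C2 * (1 + (\<Sum>j<n. \<bar>a j\<bar>))"
    using assms(1,2) by (metis lin_boundedE)
  show ?thesis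
  proof (rule lin_boundedI[OF assms(3), where C = "C1 + C2"])
    fix a assume "a \<in> space P"
    then show "\<bar>h a\<bar> \<le> (C1 + C2) * (1 + (\<Sum>j<n. \<bar>a j\<bar>))"
      using order_trans[OF assms(4) add_mono[OF C1 C2]] by (simp add: distrib_right)
  qed
qed

context
  fixes f g
  assumes f: "lin_bounded f" and g: "lin_bounded g"
begin

lemma lin_bounded_add: "lin_bounded (\<lambda>a. f a + g a)"
  using lin_bounded_measurable[OF f] lin_bounded_measurable[OF g]
  by (intro lin_bounded_dominated[OF f g]) auto

lemma lin_bounded_diff: "lin_bounded (\<lambda>a. f a - g a)"
  using lin_bounded_measurable[OF f] lin_bounded_measurable[OF g]
  by (intro lin_bounded_dominated[OF f g]) auto

lemma lin_bounded_max: "lin_bounded (\<lambda>a. max (f a) (g a))"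
  using lin_bounded_measurable[OF f] lin_bounded_measurable[OF g]
  by (intro lin_bounded_dominated[OF f g]) auto

lemma lin_bounded_If: "Measurable.pred P Q \<Longrightarrow> lin_bounded (\<lambda>a. if Q a then f a else g a)"
  using lin_bounded_measurable[OF f] lin_bounded_measurable[OF g]
  by (intro lin_bounded_dominated[OF f g]) auto

end

lemma lin_bounded_topsum:
  assumes "A \<subseteq> {..<n}" "m \<le> card A"
  shows "lin_bounded (topsum m A)"
proof (rule lin_boundedI[where C = 1])
  have "finite A" using assms(1) finite_subset by blast
  show "topsum m A \<in> borel_measurable P"
    unfolding topsum_def using assms(1) measurable_component_P topsum_family_finite[OF \<open>finite A\<close>]
    by (intro borel_measurable_Max borel_measurable_sum) auto
  fix a
  have "\<bar>topsum m A a\<bar> \<le> (\<Sum>i\<in>A. \<bar>a i\<bar>)" by (rule abs_topsum_le[OF \<open>finite A\<close> assms(2)])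
  also have "\<dots> \<le> (\<Sum>j<n. \<bar>a j\<bar>)" using assms(1) by (intro sum_mono2) auto
  finally show "\<bar>topsum m A a\<bar> \<le> 1 * (1 + (\<Sum>j<n. \<bar>a j\<bar>))" by simp
qed

lemma sum_abs_fun_upd:
  "i < n \<Longrightarrow> (\<Sum>j<n. \<bar>(a(i := s)) j\<bar>) = \<bar>s\<bar> + (\<Sum>j\<in>{..<n} - {i}. \<bar>a j\<bar>)"
  by (simp add: sum.remove[of "{..<n}" i])

lemma borel_measurable_resample:
  fixes h :: "(nat \<Rightarrow> real) \<Rightarrow> real"
  assumes i: "i < n" and h: "h \<in> borel_measurable P"
  shows "(\<lambda>a. \<integral>s. h (a(i := s)) \<partial>G i) \<in> borel_measurable P"
proof -
  interpret Gi: prob_space "G i" using prob_space_G i by blast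
  have "(\<lambda>(a, s). h (a(i := s))) \<in> borel_measurable (P \<Otimes>\<^sub>M G i)"
    using measurable_comp[OF measurable_fun_upd_P[OF i] h] by (simp add: comp_def case_prod_beta')
  then show ?thesis by (intro Gi.borel_measurable_lebesgue_integral) simp
qed

lemma lin_bounded_resample:
  assumes i: "i < n" and h: "lin_bounded h"
  shows "lin_bounded (\<lambda>a. \<integral>s. h (a(i := s)) \<partial>G i)"
proof -
  interpret Gi: prob_space "G i" using prob_space_G i by blast
  obtain C where hm: "h \<in> borel_measurable P" and C: "C \<ge> 0"
    and hb: "\<And>a. a \<in> space P \<Longrightarrow> \<bar>h a\<bar> \<le> C * (1 + (\<Sum>j<n. \<bar>a j\<bar>))"
    using h lin_boundedE by blast
  note meas = borel_measurable_resample[OF i hm]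
  define E where "E = (\<integral>s. \<bar>s\<bar> \<partial>G i)"
  have int_abs: "integrable (G i) (\<lambda>s. \<bar>s\<bar>)" using integrable_G[OF i] by (rule integrable_abs)
  show ?thesis
  proof (rule lin_boundedI[OF meas, where C = "C * (1 + E)"])
    fix a assume a: "a \<in> space P"
    define rest where "rest = (\<Sum>j\<in>{..<n} - {i}. \<bar>a j\<bar>)"
    define u where "u s = C * (1 + rest) + C * \<bar>s\<bar>" for s :: real
    have "integrable (G i) u"
      unfolding u_def using int_abs by (intro Bochner_Integration.integrable_add Gi.integrable_const
        Bochner_Integration.integrable_mult_right)
    moreover have "\<bar>h (a(i := s))\<bar> \<le> u s" for s
      using hb[OF fun_upd_in_space_P[OF a i, of s]] unfolding sum_abs_fun_upd[OF i] u_def rest_def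
      by (simp add: algebra_simps)
    moreover have "0 \<le> u s" for s unfolding u_def rest_def using C by (simp add: sum_nonneg)
    ultimately have "\<bar>\<integral>s. h (a(i := s)) \<partial>G i\<bar> \<le> (\<integral>s. u s \<partial>G i)"
      using integral_mono'[of "G i" u "\<lambda>s. h (a(i := s))"] integral_mono'[of "G i" u "\<lambda>s. - h (a(i := s))"]
      by (auto simp: abs_le_iff)
    also have "\<dots> = C * (1 + rest) + C * E"
      unfolding u_def E_def using int_abs by (simp add: Gi.prob_space)
    also have "\<dots> \<le> C * (1 + E) * (1 + (\<Sum>j<n. \<bar>a j\<bar>))"
    proof -
      have "rest \<le> (\<Sum>j<n. \<bar>a j\<bar>)" unfolding rest_def by (rule sum_mono2) auto
      moreover have "0 \<le> E * (\<Sum>j<n. \<bar>a j\<bar>)" unfolding E_def by (simp add: sum_nonneg)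
      ultimately have "1 + rest + E \<le> (1 + E) * (1 + (\<Sum>j<n. \<bar>a j\<bar>))"
        by (simp add: algebra_simps)
      then show ?thesis using C by (metis distrib_left mult.assoc mult_left_mono)
    qed
    finally show "\<bar>\<integral>s. h (a(i := s)) \<partial>G i\<bar> \<le> C * (1 + E) * (1 + (\<Sum>j<n. \<bar>a j\<bar>))" .
  qed
qed

lemma integral_resample:
  assumes i: "i < n" and h: "lin_bounded h"
  shows "(\<integral>a. h a \<partial>P) = (\<integral>a. (\<integral>s. h (a(i := s)) \<partial>G i) \<partial>P)"
proof -
  \<comment> \<open>\<open>product_sigma_finite\<close> constrains every factor, also those outside \<open>{..<n}\<close>\<close>
  define G' where "G' j = (if j < n then G j else return borel 0)" for j
  have "prob_space (G' j)" for j
    unfolding G'_def using prob_space_G by (auto intro: prob_space_return)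
  then interpret G': product_sigma_finite G'
    by (intro product_sigma_finite.intro prob_space_imp_sigma_finite)
  interpret Gi: prob_space "G i" using prob_space_G i by blast
  define J where "J = {..<n} - {i}"
  have J: "finite J" "i \<notin> J" "P = PiM (insert i J) G'"
    using i unfolding J_def G'_def by (auto simp: insert_absorb intro!: PiM_cong)
  have "G' i = G i" using i by (simp add: G'_def)
  define g where "g a = (\<integral>s. h (a(i := s)) \<partial>G i)" for a
  have "lin_bounded g" unfolding g_def by (rule lin_bounded_resample[OF i h])
  have g_upd: "g (x(i := y)) = g x" for x y by (simp add: g_def)
  have "(\<integral>a. h a \<partial>P) = (\<integral>x. g x \<partial>PiM J G')"
    using G'.product_integral_insert[OF J(1,2), of h] lin_bounded_integrable[OF h]
    by (simp add: J(3) \<open>G' i = G i\<close> g_def)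
  also have "\<dots> = (\<integral>a. g a \<partial>P)"
    using G'.product_integral_insert[OF J(1,2), of g] lin_bounded_integrable[OF \<open>lin_bounded g\<close>]
    by (simp add: J(3) \<open>G' i = G i\<close> g_upd Gi.prob_space)
  finally show ?thesis by (simp add: g_def)
qed

lemma OBJ_le_integral_topsum_add_topsum:
  assumes "feasible_mech n k x y" "k \<le> n"
    and "\<And>i. i < n \<Longrightarrow> AE t in G i. t \<ge> 0" "\<And>i. i < n \<Longrightarrow> ov i \<ge> 0"
  shows "OBJ n G ov x y \<le> (\<integral>a. topsum k {..<n} a \<partial>P) + topsum k {..<n} ov"
proof -
  interpret p: prob_space P by (rule prob_space_P)
  have nonneg: "AE a in P. \<forall>i\<in>{..<n}. a i \<ge> 0"
    using assms(3) prob_space_G by (intro AE_finite_allI) (auto intro: AE_PiM_component)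
  have int: "integrable P (topsum k {..<n})"
    using assms(2) by (intro lin_bounded_integrable lin_bounded_topsum) auto
  have "OBJ n G ov x y \<le> (\<integral>a. topsum k {..<n} a + topsum k {..<n} ov \<partial>P)"
    unfolding OBJ_def profile_dist_def
  proof (rule integral_mono_AE')
    show "AE a in P. (\<Sum>i<n. (if x a i then a i else 0) + (if y a i then ov i else 0))
        \<le> topsum k {..<n} a + topsum k {..<n} ov"
      using nonneg by eventually_elim (use feasible_value_le_topsum_add_topsum assms(1,2,4) in auto)
    show "AE a in P. 0 \<le> topsum k {..<n} a + topsum k {..<n} ov"
      using nonneg by eventually_elim (use assms(2,4) in \<open>auto intro!: add_nonneg_nonneg topsum_nonneg\<close>)
  qed (use int in simp)
  also have "\<dots> = (\<integral>a. topsum k {..<n} a \<partial>P) + topsum k {..<n} ov"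
    using int by (simp add: p.prob_space)
  finally show ?thesis .
qed

end

locale gchange_list = profile_space +
  fixes k :: nat and ov :: "nat \<Rightarrow> real" and I :: "nat list"
  assumes k_le_n: "k \<le> n" and distinct_I: "distinct I" and length_I: "length I = k"
    and set_I: "set I \<subseteq> {..<n}"
begin

abbreviation "w t \<equiv> wC n k G ov I t"
abbreviation "R t \<equiv> Rc n k ov I t"

text \<open>\<open>stage_value k\<close> is the integrand of the paper's closed formula for \<open>OBJ(M\<^sup>C\<^sub>I)\<close>.\<close>

fun stage_value :: "nat \<Rightarrow> (nat \<Rightarrow> real) \<Rightarrow> real" where
  "stage_value 0 a = topsum k {..<n} a"
| "stage_value (Suc t) a = max (ov (I ! t) + R t a) (w t a + R t a)"

lemma nth_I_less: "t < k \<Longrightarrow> I ! t < n"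
  using set_I length_I nth_mem by blast

lemma set_take_Suc_I: "t < k \<Longrightarrow> set (take (Suc t) I) = insert (I ! t) (set (take t I))"
  using length_I by (simp add: take_Suc_conv_app_nth)

lemma card_remaining: "s \<le> k \<Longrightarrow> card ({..<n} - set (take s I)) = n - s"
  using set_I length_I distinct_card[OF distinct_take[OF distinct_I]]
  by (subst card_Diff_subset) (auto dest: subsetD[OF set_take_subset])

lemma w_plus_R_eq_integral: "w t a + R t a = (\<integral>s. stage_value t (a(I ! t := s)) \<partial>G (I ! t))"
  by (cases t) simp_all

lemma R_fun_upd: "j \<in> set (take (Suc t) I) \<Longrightarrow> R t (a(j := v)) = R t a"
  unfolding Rc_def by (simp add: topsum_fun_upd_outside)

lemma w_fun_upd: "t < k \<Longrightarrow> j \<in> set (take (Suc t) I) \<Longrightarrow> w t (a(j := v)) = w t a"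
proof (induction t arbitrary: a)
  case 0
  then have j: "j = I ! 0" using length_I by (cases I) auto
  show ?case using R_fun_upd[OF "0.prems"(2)] unfolding j by (simp only: wC.simps fun_upd_upd)
next
  case (Suc t)
  note R_upd = R_fun_upd[OF Suc.prems(2)]
  show ?case
  proof (cases "j = I ! Suc t")
    case True
    show ?thesis using R_upd unfolding True by (simp only: wC.simps fun_upd_upd)
  next
    case False
    then have j: "j \<in> set (take (Suc t) I)" using Suc.prems set_take_Suc_I[of "Suc t"] by auto
    have twist: "a(j := v, I ! Suc t := s) = (a(I ! Suc t := s))(j := v)" for s
      using False by (rule fun_upd_twist)
    have "w t (a(j := v, I ! Suc t := s)) = w t (a(I ! Suc t := s))" for s
      unfolding twist using Suc.prems(1) by (intro Suc.IH[OF _ j]) simp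
    moreover have "R t (a(j := v, I ! Suc t := s)) = R t (a(I ! Suc t := s))" for s
      unfolding twist by (rule R_fun_upd[OF j])
    ultimately show ?thesis by (simp only: wC.simps R_upd)
  qed
qed

lemma lin_bounded_R: "t < k \<Longrightarrow> lin_bounded (R t)"
  unfolding Rc_def using card_remaining[of "Suc t"] k_le_n
  by (intro lin_bounded_add[OF lin_bounded_const] lin_bounded_topsum) auto

lemma lin_bounded_w_plus_R:
  "t < k \<Longrightarrow> lin_bounded (stage_value t) \<Longrightarrow> lin_bounded (\<lambda>a. w t a + R t a)"
  unfolding w_plus_R_eq_integral by (rule lin_bounded_resample[OF nth_I_less])

lemma lin_bounded_stage_value: "t \<le> k \<Longrightarrow> lin_bounded (stage_value t)"
proof (induction t)
  case 0
  show ?case using k_le_n by (simp add: lin_bounded_topsum)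
next
  case (Suc t)
  then have "lin_bounded (\<lambda>a. w t a + R t a)" by (intro lin_bounded_w_plus_R) auto
  with Suc.prems show ?case
    by (simp add: lin_bounded_max lin_bounded_add lin_bounded_const lin_bounded_R)
qed

lemma lin_bounded_w:
  assumes "t < k"
  shows "lin_bounded (w t)"
proof -
  have "lin_bounded (\<lambda>a. (w t a + R t a) - R t a)"
    using assms by (intro lin_bounded_diff lin_bounded_w_plus_R lin_bounded_stage_value lin_bounded_R) auto
  then show ?thesis by simp
qed

lemma stage_value_Suc_If:
  "stage_value (Suc t) a = (if w t a \<le> ov (I ! t) then ov (I ! t) + R t a else w t a + R t a)"
  by (simp add: max_def)

lemma organic_sum_le_stage_value: "(\<Sum>j<k. ov (I ! j)) \<le> stage_value k a"
proof (cases k)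
  \<comment> \<open>\<open>arg_cong\<close>: substituting \<open>k\<close> would also rewrite the parameter \<open>k\<close> hidden in \<open>stage_value\<close>\<close>
  case 0
  have "stage_value k a = stage_value 0 a" using 0 by (rule arg_cong)
  moreover have "stage_value 0 a = topsum k {..<n} a" by simp
  ultimately show ?thesis using 0 by (simp add: topsum_0)
next
  case (Suc m)
  have "stage_value k a = stage_value (Suc m) a" using Suc by (rule arg_cong)
  moreover have "ov (I ! m) + R m a \<le> stage_value (Suc m) a" by simp
  moreover have "R m a = (\<Sum>j<m. ov (I ! j))" using Suc by (simp add: Rc_def topsum_0)
  moreover have "(\<Sum>j<k. ov (I ! j)) = (\<Sum>j<m. ov (I ! j)) + ov (I ! m)" using Suc by simp
  ultimately show ?thesis by linarith
qed

text \<open>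
  The mechanism restricted to the first \<open>t\<close> positions of \<open>I\<close>: \<open>organic_prefix k\<close> is \<open>s\<^sup>*\<close>,
  and \<open>realized_value k\<close> is the integrand of \<open>OBJ_GC_I\<close>.
\<close>

definition organic_prefix :: "nat \<Rightarrow> (nat \<Rightarrow> real) \<Rightarrow> nat" where
  "organic_prefix t a = Max ({0} \<union> {s \<in> {1..t}. ov (I ! (s - 1)) \<ge> w (s - 1) a})"

definition realized_value :: "nat \<Rightarrow> (nat \<Rightarrow> real) \<Rightarrow> real" where
  "realized_value t a = (let s = organic_prefix t a in
     (\<Sum>j<s. ov (I ! j)) + topsum (k - s) ({..<n} - set (take s I)) a)"

lemma organic_prefix_Suc:
  "organic_prefix (Suc t) a = (if w t a \<le> ov (I ! t) then Suc t else organic_prefix t a)"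
proof (cases "w t a \<le> ov (I ! t)")
  case True
  then show ?thesis unfolding organic_prefix_def by (intro Max_eqI) auto
next
  case False
  then have "{s \<in> {1..Suc t}. ov (I ! (s - 1)) \<ge> w (s - 1) a}
      = {s \<in> {1..t}. ov (I ! (s - 1)) \<ge> w (s - 1) a}"
    by (auto simp: le_Suc_eq)
  with False show ?thesis unfolding organic_prefix_def by simp
qed

lemma realized_value_0: "realized_value 0 a = topsum k {..<n} a"
  by (simp add: realized_value_def organic_prefix_def)

lemma realized_value_Suc:
  "realized_value (Suc t) a =
     (if w t a \<le> ov (I ! t) then ov (I ! t) + R t a else realized_value t a)"
  by (simp add: realized_value_def organic_prefix_Suc Rc_def)

lemma OBJ_GC_I_eq_integral_realized_value: "OBJ_GC_I n k G ov I = (\<integral>a. realized_value k a \<partial>P)"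
  unfolding OBJ_GC_I_def profile_dist_def realized_value_def organic_prefix_def sstar_def ..

lemma pred_w_le: "t < k \<Longrightarrow> Measurable.pred P (\<lambda>a. w t a \<le> ov (I ! t))"
  unfolding pred_def by (intro borel_measurable_le lin_bounded_measurable lin_bounded_w lin_bounded_const)

lemma lin_bounded_realized_value: "t \<le> k \<Longrightarrow> lin_bounded (realized_value t)"
proof (induction t)
  case 0
  show ?case using k_le_n by (simp add: realized_value_0 lin_bounded_topsum)
next
  case (Suc t)
  then have "lin_bounded (\<lambda>a. ov (I ! t) + R t a)"
    by (simp add: lin_bounded_add lin_bounded_const lin_bounded_R)
  with Suc show ?case unfolding realized_value_Suc
    by (intro lin_bounded_If pred_w_le) auto
qed

lemma integral_restricted_average:
  assumes t: "t < k" and Q: "Measurable.pred P Q" and Q_upd: "\<And>a s. Q (a(I ! t := s)) = Q a"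
  shows "(\<integral>a. (if Q a then stage_value t a else 0) \<partial>P) = (\<integral>a. (if Q a then w t a + R t a else 0) \<partial>P)"
proof -
  have "lin_bounded (\<lambda>a. if Q a then stage_value t a else 0)"
    using t Q by (intro lin_bounded_If lin_bounded_stage_value lin_bounded_const) auto
  then have "(\<integral>a. (if Q a then stage_value t a else 0) \<partial>P)
      = (\<integral>a. (\<integral>s. (if Q (a(I ! t := s)) then stage_value t (a(I ! t := s)) else 0) \<partial>G (I ! t)) \<partial>P)"
    by (rule integral_resample[OF nth_I_less[OF t]])
  also have "\<dots> = (\<integral>a. (if Q a then w t a + R t a else 0) \<partial>P)"
  proof (rule Bochner_Integration.integral_cong[OF refl])
    fix a
    show "(\<integral>s. (if Q (a(I ! t := s)) then stage_value t (a(I ! t := s)) else 0) \<partial>G (I ! t))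
        = (if Q a then w t a + R t a else 0)"
      by (cases "Q a") (simp_all add: Q_upd w_plus_R_eq_integral)
  qed
  finally show ?thesis .
qed

text \<open>
  The event \<open>Q\<close> is generalised because the induction step passes to the event where
  position \<open>t\<close> is not taken organically.
\<close>

lemma integral_restricted_realized_value:
  assumes "t \<le> k" "Measurable.pred P Q" "\<And>a j v. j \<in> set (take t I) \<Longrightarrow> Q (a(j := v)) = Q a"
  shows "(\<integral>a. (if Q a then realized_value t a else 0) \<partial>P) = (\<integral>a. (if Q a then stage_value t a else 0) \<partial>P)"
  using assms
proof (induction t arbitrary: Q)
  case 0
  show ?case by (intro Bochner_Integration.integral_cong) (simp_all add: realized_value_0)
next
  case (Suc t)
  let ?c = "\<lambda>a. w t a \<le> ov (I ! t)"
  let ?Q = "\<lambda>a. Q a \<and> \<not> ?c a"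
  have t: "t < k" using Suc.prems(1) by simp
  have Qc: "Measurable.pred P (\<lambda>a. Q a \<and> ?c a)" and Q': "Measurable.pred P ?Q"
    using Suc.prems(2) pred_w_le[OF t] by (auto intro: pred_intros_logic)
  have Q'_upd: "?Q (a(j := v)) = ?Q a" if "j \<in> set (take (Suc t) I)" for a j v
    by (simp only: Suc.prems(3)[OF that] w_fun_upd[OF t that])
  have lb: "integrable P (\<lambda>a. if Q a \<and> ?c a then ov (I ! t) + R t a else 0)"
    "integrable P (\<lambda>a. if ?Q a then realized_value t a else 0)"
    "integrable P (\<lambda>a. if ?Q a then w t a + R t a else 0)"
    using t Qc Q' by (auto intro!: lin_bounded_integrable lin_bounded_If lin_bounded_add lin_bounded_const lin_bounded_R
        lin_bounded_realized_value lin_bounded_w)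
  have "(\<integral>a. (if Q a then realized_value (Suc t) a else 0) \<partial>P)
      = (\<integral>a. (if Q a \<and> ?c a then ov (I ! t) + R t a else 0) \<partial>P)
        + (\<integral>a. (if ?Q a then realized_value t a else 0) \<partial>P)"
    by (subst Bochner_Integration.integral_add[symmetric, OF lb(1,2)])
       (auto intro!: Bochner_Integration.integral_cong simp: realized_value_Suc)
  also have "(\<integral>a. (if ?Q a then realized_value t a else 0) \<partial>P)
      = (\<integral>a. (if ?Q a then stage_value t a else 0) \<partial>P)"
  proof (rule Suc.IH[OF _ Q'])
    fix a j v assume "j \<in> set (take t I)"
    then show "?Q (a(j := v)) = ?Q a" using set_take_Suc_I[OF t] by (intro Q'_upd) auto
  qed (use t in simp)
  also have "\<dots> = (\<integral>a. (if ?Q a then w t a + R t a else 0) \<partial>P)"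
    using Q'_upd[of "I ! t"] set_take_Suc_I[OF t] by (intro integral_restricted_average[OF t Q']) auto
  also have "(\<integral>a. (if Q a \<and> ?c a then ov (I ! t) + R t a else 0) \<partial>P) + \<dots>
      = (\<integral>a. (if Q a then stage_value (Suc t) a else 0) \<partial>P)"
    by (subst Bochner_Integration.integral_add[symmetric, OF lb(1,3)])
       (auto intro!: Bochner_Integration.integral_cong simp: stage_value_Suc_If)
  finally show ?case .
qed

lemma OBJ_GC_I_eq_integral_stage_value: "OBJ_GC_I n k G ov I = (\<integral>a. stage_value k a \<partial>P)"
  using integral_restricted_realized_value[of k "\<lambda>_. True"]
  by (simp add: OBJ_GC_I_eq_integral_realized_value)

lemma integral_stage_value_le_Suc:
  assumes t: "t < k"
  shows "(\<integral>a. stage_value t a \<partial>P) \<le> (\<integral>a. stage_value (Suc t) a \<partial>P)"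
proof -
  have "(\<integral>a. stage_value t a \<partial>P) = (\<integral>a. w t a + R t a \<partial>P)"
    using integral_restricted_average[OF t, of "\<lambda>_. True"] by simp
  also have "\<dots> \<le> (\<integral>a. stage_value (Suc t) a \<partial>P)"
    using t by (intro integral_mono lin_bounded_integrable lin_bounded_stage_value
        lin_bounded_add lin_bounded_w lin_bounded_R) auto
  finally show ?thesis .
qed

lemma integral_topsum_le_OBJ_GC_I: "(\<integral>a. topsum k {..<n} a \<partial>P) \<le> OBJ_GC_I n k G ov I"
proof -
  have "(\<integral>a. stage_value 0 a \<partial>P) \<le> (\<integral>a. stage_value t a \<partial>P)" if "t \<le> k" for t
    using that by (induction t) (auto intro: order_trans[OF _ integral_stage_value_le_Suc])
  then show ?thesis by (simp add: OBJ_GC_I_eq_integral_stage_value)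
qed

lemma organic_sum_le_OBJ_GC_I: "(\<Sum>j<k. ov (I ! j)) \<le> OBJ_GC_I n k G ov I"
proof -
  interpret p: prob_space P by (rule prob_space_P)
  have "(\<integral>a. (\<Sum>j<k. ov (I ! j)) \<partial>P) \<le> (\<integral>a. stage_value k a \<partial>P)"
    by (intro integral_mono p.integrable_const lin_bounded_integrable lin_bounded_stage_value
        organic_sum_le_stage_value) simp
  then show ?thesis by (simp add: OBJ_GC_I_eq_integral_stage_value p.prob_space)
qed

end

lemma OBJ_GC_I_le_OBJ_GC:
  assumes "distinct I" "length I = k" "set I \<subseteq> {..<n}"
  shows "OBJ_GC_I n k G ov I \<le> OBJ_GC n k G ov"
proof -
  have "finite {I. distinct I \<and> length I = k \<and> set I \<subseteq> {..<n}}"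
    by (rule finite_subset[OF _ finite_lists_length_eq[OF finite_lessThan, of n k]]) auto
  with assms show ?thesis unfolding OBJ_GC_def by (intro Max_ge) auto
qed

theorem theorem6:
  fixes n k :: nat and G :: "nat \<Rightarrow> real measure" and ov :: "nat \<Rightarrow> real"
  assumes "k \<le> n"
    and "\<And>i. i < n \<Longrightarrow> prob_space (G i)"
    and "\<And>i. i < n \<Longrightarrow> sets (G i) = sets borel"
    and "\<And>i. i < n \<Longrightarrow> AE t in G i. t \<ge> 0"
    and "\<And>i. i < n \<Longrightarrow> integrable (G i) (\<lambda>t. t)"
    and "\<And>i. i < n \<Longrightarrow> ov i \<ge> 0"
  shows "\<forall>x y. feasible_mech n k x y \<longrightarrow> OBJ_GC n k G ov \<ge> OBJ n G ov x y / 2"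
proof (intro allI impI)
  fix x y assume feasible: "feasible_mech n k x y"
  interpret profile_space n G using assms(2,3,5) by (rule profile_space.intro)
  obtain B where B: "B \<subseteq> {..<n}" "card B = k" "topsum k {..<n} ov = (\<Sum>i\<in>B. ov i)"
    using topsum_attained[of "{..<n}" k] assms(1) by auto
  define I where "I = sorted_list_of_set B"
  have I: "distinct I" "length I = k" "set I \<subseteq> {..<n}" "set I = B"
    using B finite_subset[OF B(1)] unfolding I_def by auto
  interpret gchange_list n G k ov I
    using assms(1) I by (intro gchange_list.intro gchange_list_axioms.intro profile_space_axioms)
  have "topsum k {..<n} ov = (\<Sum>j<k. ov (I ! j))"
    using sum_list_distinct_conv_sum_set[OF I(1), of ov] sum_list_sum_nth[of "map ov I"] B(3) I
    by (simp add: atLeast0LessThan)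
  then have "OBJ n G ov x y \<le> 2 * OBJ_GC_I n k G ov I"
    using OBJ_le_integral_topsum_add_topsum[where ov = ov, OF feasible assms(1,4,6)]
      integral_topsum_le_OBJ_GC_I organic_sum_le_OBJ_GC_I by linarith
  then show "OBJ_GC n k G ov \<ge> OBJ n G ov x y / 2"
    using OBJ_GC_I_le_OBJ_GC[where G = G and ov = ov, OF I(1-3)] by linarith
qed

end
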